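(* For all $n\ge0$, all $0\le k\le n$ and all complex $a,b,c_0,c_\infty$, $$E_{n,k}(a,b;c_0,c_\infty)=\sum_{j=k}^n(-1)^{j-k}\binom jk(c_0+c_\infty)^{\overline{n-j},b}\,S_{n,n-j}(-a,b;c_\infty),$$ $$(c_0+c_\infty)^{\overline{n-k},b}\,S_{n,n-k}(-a,b;c_\infty)=\sum_{j=k}^n\binom jk E_{n,j}(a,b;c_0,c_\infty).$$
   Context: GKP triangle $\left[\begin{array}{cc|c}\alpha,&\beta&\gamma\\ \alpha',&\beta'&\gamma'\end{array}\right]_{n,k}$: defined by $T_{0,0}=1$, $T_{n,k}=0$ if $n<0$, $k<0$ or $k>n$, and $T_{n+1,k+1}=[\alpha n+\beta(k+1)+\gamma]T_{n,k+1}+[\alpha' n+\beta' k+\gamma']T_{n,k}$ for $n\ge0$, $k\in\mathbb Z$. Hsu–Shiue Stirling numbers: $S_{n,k}(a,b;r):=\left[\begin{array}{cc|c}-a,&b&r\\ 0,&0&1\end{array}\right]_{n,k}$. Generalized Eulerian numbers: $E_{n,k}(a,b;c_0,c_\infty):=\left[\begin{array}{cc|c}-a,&b&c_0\\ a+b,&-b&c_\infty\end{array}\right]_{n,k}$, i.e. $E_{n+1,k+1}=[-an+b(k+1)+c_0]E_{n,k+1}+[(a+b)n-bk+c_\infty]E_{n,k}$. $(x)^{\overline n,b}=\prod_{i=0}^{n-1}(x+ib)$, $(x)^{\underline n,a}=\prod_{i=0}^{n-1}(x-ia)$. *)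

theory Defs
  imports Complex_Main
begin

fun GKP :: "complex \<Rightarrow> complex \<Rightarrow> complex \<Rightarrow> complex \<Rightarrow> complex \<Rightarrow> complex \<Rightarrow> nat \<Rightarrow> int \<Rightarrow> complex" where
  "GKP al be ga al' be' ga' 0 k = (if k = 0 then 1 else 0)"
| "GKP al be ga al' be' ga' (Suc n) k =
     (if k < 0 \<or> k > int (Suc n) then 0 else
       (al * of_nat n + be * of_int k + ga) * GKP al be ga al' be' ga' n k
     + (al' * of_nat n + be' * of_int (k - 1) + ga') * GKP al be ga al' be' ga' n (k - 1))"

definition HS_Stirling :: "nat \<Rightarrow> int \<Rightarrow> complex \<Rightarrow> complex \<Rightarrow> complex \<Rightarrow> complex" where
  "HS_Stirling n k a b r = GKP (- a) b r 0 0 1 n k"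

definition GEuler :: "nat \<Rightarrow> int \<Rightarrow> complex \<Rightarrow> complex \<Rightarrow> complex \<Rightarrow> complex \<Rightarrow> complex" where
  "GEuler n k a b c0 cinf = GKP (- a) b c0 (a + b) (- b) cinf n k"

definition rising_inc :: "complex \<Rightarrow> nat \<Rightarrow> complex \<Rightarrow> complex" where
  "rising_inc x n b = (\<Prod>i<n. x + of_nat i * b)"

end

theory Submission imports Defs begin

text \<open>Write \<open>F n k = (c0+cinf)^{n-k,b} S_{n,n-k}(-a,b;cinf)\<close> and
  \<open>G n k = \<Sum>j. C(j,k) E_{n,j}(a,b;c0,cinf)\<close>. Both arrays start from the unit row \<open>n = 0\<close>
  and obey the same two-term recurrence
  \<open>X (n+1) (k+1) = (c0 + cinf + (n-k-1) b) X n (k+1) + (a n + b (n-k) + cinf) X n k\<close>: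
  for \<open>F\<close> this is the Stirling recurrence together with one factor of the rising factorial,
  for \<open>G\<close> it is the Eulerian recurrence combined with Pascal's rule and the absorption identity
  \<open>j C(j,k) = k C(j,k) + (k+1) C(j,k+1)\<close>. Hence \<open>F = G\<close>, which is the second identity, and the
  first one follows from it by binomial inversion.\<close>

lemma GKP_eq_0: "k < 0 \<or> int n < k \<Longrightarrow> GKP al be ga al' be' ga' n k = 0"
  by (induction n arbitrary: k) auto

lemma GKP_Suc_eq:
  "GKP al be ga al' be' ga' (Suc n) k =
     (al * of_nat n + be * of_int k + ga) * GKP al be ga al' be' ga' n k
   + (al' * of_nat n + be' * of_int (k - 1) + ga') * GKP al be ga al' be' ga' n (k - 1)"
  by (auto simp: GKP_eq_0)

lemma GEuler_eq_0: "k < 0 \<or> int n < k \<Longrightarrow> GEuler n k a b c0 cinf = 0"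
  unfolding GEuler_def by (rule GKP_eq_0)

lemma GEuler_Suc:
  "GEuler (Suc n) (int j) a b c0 cinf =
     (b * of_nat j - a * of_nat n + c0) * GEuler n (int j) a b c0 cinf
   + ((a + b) * of_nat n - b * (of_nat j - 1) + cinf) * GEuler n (int j - 1) a b c0 cinf"
  unfolding GEuler_def by (subst GKP_Suc_eq) (simp add: algebra_simps)

lemma HS_Stirling_eq_0: "k < 0 \<or> int n < k \<Longrightarrow> HS_Stirling n k a b r = 0"
  unfolding HS_Stirling_def by (rule GKP_eq_0)

lemma HS_Stirling_Suc:
  "HS_Stirling (Suc n) k a b r =
     (b * of_int k - a * of_nat n + r) * HS_Stirling n k a b r + HS_Stirling n (k - 1) a b r"
  unfolding HS_Stirling_def by (subst GKP_Suc_eq) (simp add: algebra_simps)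

lemma rising_inc_Suc: "rising_inc x (Suc m) b = rising_inc x m b * (x + of_nat m * b)"
  unfolding rising_inc_def by simp

lemma times_choose_eq: "j * (j choose k) = k * (j choose k) + Suc k * (j choose Suc k)"
proof (induction j arbitrary: k)
  case 0
  then show ?case by (cases k) auto
next
  case (Suc j)
  then show ?case by (cases k) (auto simp: algebra_simps)
qed

lemma sum_alternating_choose_choose:
  assumes "i \<le> n"
  shows "(\<Sum>j=k..n. (-1) ^ (j - k) * of_nat (j choose k) * of_nat (i choose j) :: 'a::comm_ring_1)
       = (if i = k then 1 else 0)"
proof (cases "k \<le> i")
  case False
  then have "(-1) ^ (j - k) * of_nat (j choose k) * of_nat (i choose j) = (0::'a)" if "k \<le> j" for j
    using that False by (simp add: binomial_eq_0)
  then show ?thesis using False by (simp add: sum.neutral)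
next
  case True
  have "(\<Sum>j=k..n. (-1) ^ (j - k) * of_nat (j choose k) * of_nat (i choose j) :: 'a)
      = (\<Sum>j=k..i. (-1) ^ (j - k) * of_nat (j choose k) * of_nat (i choose j))"
    using assms by (intro sum.mono_neutral_right) (auto simp: binomial_eq_0)
  also have "\<dots> = (\<Sum>l=0..i-k. (-1) ^ l * of_nat ((l + k) choose k) * of_nat (i choose (l + k)))"
    using True sum.shift_bounds_cl_nat_ivl[of "\<lambda>j. (-1) ^ (j - k) * of_nat (j choose k) * of_nat (i choose j) :: 'a" 0 k "i - k"]
    by simp
  also have "\<dots> = of_nat (i choose k) * (\<Sum>l\<le>i-k. (-1) ^ l * of_nat ((i - k) choose l))"
    unfolding sum_distrib_left atLeast0AtMost[symmetric]
  proof (rule sum.cong)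
    fix l assume "l \<in> {0..i-k}"
    then have "(i choose (l + k)) * ((l + k) choose k) = (i choose k) * ((i - k) choose l)"
      using True by (subst choose_mult) auto
    then show "(-1) ^ l * of_nat ((l + k) choose k) * of_nat (i choose (l + k))
        = of_nat (i choose k) * ((-1) ^ l * of_nat ((i - k) choose l) :: 'a)"
      by (metis (mono_tags, lifting) mult.commute mult.left_commute of_nat_mult)
  qed simp
  also have "\<dots> = (if i = k then 1 else 0)"
    using True choose_alternating_sum[of "i - k", where 'a = 'a] by simp
  finally show ?thesis .
qed

lemma binomial_inversion:
  fixes f :: "nat \<Rightarrow> 'a::comm_ring_1"
  assumes "k \<le> n"
  shows "(\<Sum>j=k..n. (-1) ^ (j - k) * of_nat (j choose k) * (\<Sum>i\<le>n. of_nat (i choose j) * f i)) = f k"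
proof -
  have "(\<Sum>j=k..n. (-1) ^ (j - k) * of_nat (j choose k) * (\<Sum>i\<le>n. of_nat (i choose j) * f i))
      = (\<Sum>i\<le>n. f i * (\<Sum>j=k..n. (-1) ^ (j - k) * of_nat (j choose k) * of_nat (i choose j)))"
    unfolding sum_distrib_left by (subst sum.swap) (simp add: algebra_simps)
  also have "\<dots> = (\<Sum>i\<le>n. if i = k then f i else 0)"
    by (rule sum.cong) (simp_all add: sum_alternating_choose_choose)
  also have "\<dots> = f k"
    using assms by simp
  finally show ?thesis .
qed

definition Stirling_rising :: "complex \<Rightarrow> complex \<Rightarrow> complex \<Rightarrow> complex \<Rightarrow> nat \<Rightarrow> nat \<Rightarrow> complex" where
  "Stirling_rising a b c0 cinf n k = (if k \<le> n
     then rising_inc (c0 + cinf) (n - k) b * HS_Stirling n (int (n - k)) (- a) b cinf else 0)"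

definition Euler_binomial_sum :: "complex \<Rightarrow> complex \<Rightarrow> complex \<Rightarrow> complex \<Rightarrow> nat \<Rightarrow> nat \<Rightarrow> complex" where
  "Euler_binomial_sum a b c0 cinf n k = (\<Sum>j\<le>n. of_nat (j choose k) * GEuler n (int j) a b c0 cinf)"

lemma Stirling_rising_0: "Stirling_rising a b c0 cinf 0 k = (if k = 0 then 1 else 0)"
  by (simp add: Stirling_rising_def rising_inc_def HS_Stirling_def)

lemma Euler_binomial_sum_0: "Euler_binomial_sum a b c0 cinf 0 k = (if k = 0 then 1 else 0)"
  by (simp add: Euler_binomial_sum_def GEuler_def)

lemma Stirling_rising_Suc_0:
  "Stirling_rising a b c0 cinf (Suc n) 0 = (c0 + cinf + of_nat n * b) * Stirling_rising a b c0 cinf n 0"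
  by (simp add: Stirling_rising_def rising_inc_Suc HS_Stirling_Suc HS_Stirling_eq_0)

lemma Stirling_rising_Suc_Suc:
  "Stirling_rising a b c0 cinf (Suc n) (Suc k) =
     (c0 + cinf + (of_nat n - of_nat k - 1) * b) * Stirling_rising a b c0 cinf n (Suc k)
   + (a * of_nat n + b * (of_nat n - of_nat k) + cinf) * Stirling_rising a b c0 cinf n k"
proof -
  consider "n < k" | "k = n" | m where "n = Suc (k + m)"
    by (metis less_imp_Suc_add linorder_neqE_nat)
  then show ?thesis
  proof cases
    case 1
    then show ?thesis by (simp add: Stirling_rising_def)
  next
    case 2
    then show ?thesis by (simp add: Stirling_rising_def rising_inc_def HS_Stirling_Suc HS_Stirling_eq_0)
  next
    case (3 m)
    then have "Suc k \<le> n" "n - k = Suc m" "n - Suc k = m" "(of_nat n :: complex) = of_nat k + of_nat m + 1"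
      by auto
    then show ?thesis
      by (simp add: Stirling_rising_def rising_inc_Suc HS_Stirling_Suc algebra_simps)
  qed
qed

lemma Euler_binomial_sum_Suc:
  "Euler_binomial_sum a b c0 cinf (Suc n) k =
     (\<Sum>j\<le>n. (of_nat (j choose k) * (b * of_nat j - a * of_nat n + c0)
        + of_nat (Suc j choose k) * ((a + b) * of_nat n - b * of_nat j + cinf)) * GEuler n (int j) a b c0 cinf)"
proof -
  let ?E = "\<lambda>j. GEuler n j a b c0 cinf"
  have "Euler_binomial_sum a b c0 cinf (Suc n) k
      = (\<Sum>j\<le>Suc n. of_nat (j choose k) * (b * of_nat j - a * of_nat n + c0) * ?E (int j))
      + (\<Sum>j\<le>Suc n. of_nat (j choose k) * ((a + b) * of_nat n - b * (of_nat j - 1) + cinf) * ?E (int j - 1))"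
    unfolding Euler_binomial_sum_def GEuler_Suc sum.distrib[symmetric]
    by (rule sum.cong) (simp_all add: algebra_simps)
  also have "(\<Sum>j\<le>Suc n. of_nat (j choose k) * (b * of_nat j - a * of_nat n + c0) * ?E (int j))
      = (\<Sum>j\<le>n. of_nat (j choose k) * (b * of_nat j - a * of_nat n + c0) * ?E (int j))"
    by (simp add: GEuler_eq_0 del: of_nat_Suc)
  also have "(\<Sum>j\<le>Suc n. of_nat (j choose k) * ((a + b) * of_nat n - b * (of_nat j - 1) + cinf) * ?E (int j - 1))
      = (\<Sum>j\<le>n. of_nat (Suc j choose k) * ((a + b) * of_nat n - b * of_nat j + cinf) * ?E (int j))"
    unfolding sum.atMost_Suc_shift by (simp add: GEuler_eq_0)
  finally show ?thesis
    unfolding sum.distrib[symmetric] by (simp add: algebra_simps)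
qed

lemma Euler_binomial_sum_Suc_0:
  "Euler_binomial_sum a b c0 cinf (Suc n) 0 = (c0 + cinf + of_nat n * b) * Euler_binomial_sum a b c0 cinf n 0"
  unfolding Euler_binomial_sum_Suc unfolding Euler_binomial_sum_def sum_distrib_left
  by (rule sum.cong) (simp_all add: algebra_simps)

lemma Euler_binomial_sum_Suc_Suc:
  "Euler_binomial_sum a b c0 cinf (Suc n) (Suc k) =
     (c0 + cinf + (of_nat n - of_nat k - 1) * b) * Euler_binomial_sum a b c0 cinf n (Suc k)
   + (a * of_nat n + b * (of_nat n - of_nat k) + cinf) * Euler_binomial_sum a b c0 cinf n k"
  unfolding Euler_binomial_sum_Suc
  unfolding Euler_binomial_sum_def sum_distrib_left sum.distrib[symmetric]
proof (rule sum.cong)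
  fix j
  have "of_nat j * of_nat (j choose k)
      = (of_nat k * of_nat (j choose k) + (of_nat k + 1) * of_nat (j choose Suc k) :: complex)"
    using arg_cong[OF times_choose_eq[of j k], of "of_nat :: nat \<Rightarrow> complex"] by (simp add: algebra_simps)
  then show "(of_nat (j choose Suc k) * (b * of_nat j - a * of_nat n + c0)
        + of_nat (Suc j choose Suc k) * ((a + b) * of_nat n - b * of_nat j + cinf)) * GEuler n (int j) a b c0 cinf
      = (c0 + cinf + (of_nat n - of_nat k - 1) * b) * (of_nat (j choose Suc k) * GEuler n (int j) a b c0 cinf)
      + (a * of_nat n + b * (of_nat n - of_nat k) + cinf) * (of_nat (j choose k) * GEuler n (int j) a b c0 cinf)"
    by (simp add: algebra_simps)
qed simp

lemma Stirling_rising_eq_Euler_binomial_sum: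
  "Stirling_rising a b c0 cinf n k = Euler_binomial_sum a b c0 cinf n k"
proof (induction n arbitrary: k)
  case 0
  then show ?case by (simp add: Stirling_rising_0 Euler_binomial_sum_0)
next
  case (Suc n)
  then show ?case
    by (cases k) (simp_all add: Stirling_rising_Suc_0 Euler_binomial_sum_Suc_0
        Stirling_rising_Suc_Suc Euler_binomial_sum_Suc_Suc)
qed

theorem mainTheorem9:
  fixes n k :: nat and a b c0 cinf :: complex
  assumes "k \<le> n"
  shows "(GEuler n (int k) a b c0 cinf =
           (\<Sum>j=k..n. (-1) ^ (j - k) * of_nat (j choose k)
              * rising_inc (c0 + cinf) (n - j) b * HS_Stirling n (int (n - j)) (- a) b cinf)) \<and>
         (rising_inc (c0 + cinf) (n - k) b * HS_Stirling n (int (n - k)) (- a) b cinf =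
           (\<Sum>j=k..n. of_nat (j choose k) * GEuler n (int j) a b c0 cinf))"
proof
  have row_identity: "rising_inc (c0 + cinf) (n - j) b * HS_Stirling n (int (n - j)) (- a) b cinf
      = (\<Sum>i\<le>n. of_nat (i choose j) * GEuler n (int i) a b c0 cinf)" if "j \<le> n" for j
    using Stirling_rising_eq_Euler_binomial_sum[of a b c0 cinf n j] that
    by (simp add: Stirling_rising_def Euler_binomial_sum_def)
  show "rising_inc (c0 + cinf) (n - k) b * HS_Stirling n (int (n - k)) (- a) b cinf =
      (\<Sum>j=k..n. of_nat (j choose k) * GEuler n (int j) a b c0 cinf)"
    unfolding row_identity[OF assms] by (rule sum.mono_neutral_right) auto
  have "(\<Sum>j=k..n. (-1) ^ (j - k) * of_nat (j choose k)
          * rising_inc (c0 + cinf) (n - j) b * HS_Stirling n (int (n - j)) (- a) b cinf)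
      = (\<Sum>j=k..n. (-1) ^ (j - k) * of_nat (j choose k)
          * (\<Sum>i\<le>n. of_nat (i choose j) * GEuler n (int i) a b c0 cinf))"
    by (rule sum.cong) (simp_all add: row_identity[symmetric] mult.assoc)
  also have "\<dots> = GEuler n (int k) a b c0 cinf"
    using assms by (rule binomial_inversion)
  finally show "GEuler n (int k) a b c0 cinf =
      (\<Sum>j=k..n. (-1) ^ (j - k) * of_nat (j choose k)
          * rising_inc (c0 + cinf) (n - j) b * HS_Stirling n (int (n - j)) (- a) b cinf)" ..
qed

end
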